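(* Let $(x_i)_{i\in\mathbb Z}$ be real numbers and $(a_{ij})_{i,j\in\mathbb Z}$ real weights with $a_{ij}\neq0$ for all $i,j$. Assume that for every $i$ the series $\sum_{j=1}^\infty a_{i,i+j}x_{i+j}$ and $\sum_{j=1}^\infty a_{i,i-j}x_{i-j}$ converge, and that there is a constant $K\neq0$, independent of $i$, with $K=a_{ii}+\sum_{j=1}^\infty(a_{i,i-j}+a_{i,i+j})$ for every $i$ (the series converging). Define, for all $i$, $y^F_i(0)=y^B_i(0)=\frac1K a_{ii}x_i$; $y^F_i(1)=y^F_i(0)+\frac{a_{i,i+1}}{a_{i+1,i+1}}y^F_{i+1}(0)$, $\;y^B_i(1)=y^B_i(0)+\frac{a_{i,i-1}}{a_{i-1,i-1}}y^B_{i-1}(0)$; and for $k\ge1$, $y^F_i(k+1)=y^F_i(k)+\frac{a_{i,i+k+1}}{a_{i+1,i+k+1}}\big(y^F_{i+1}(k)-y^F_{i+1}(k-1)\big)$, $y^B_i(k+1)=y^B_i(k)+\frac{a_{i,i-k-1}}{a_{i-1,i-k-1}}\big(y^B_{i-1}(k)-y^B_{i-1}(k-1)\big)$. Set $y_i(k)=y^F_i(k)+y^B_i(k)-\frac1K a_{ii}x_i$ for $k\ge0$. Then for every $i$, $$\lim_{k\to\infty}y_i(k)=\frac1K\Big(a_{ii}x_i+\sum_{j=1}^\infty(a_{i,i-j}x_{i-j}+a_{i,i+j}x_{i+j})\Big).$$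
   Context: Sensors indexed by $i\in\mathbb Z$ on a line, each with time-invariant measurement $x_i$; sensor $i$ maintains forward and backward consensus variables $y^F_i(k),y^B_i(k)$ and may communicate only with sensors $i\pm1$. *)

theory Defs
  imports Complex_Main
begin

fun yF :: "(int \<Rightarrow> int \<Rightarrow> real) \<Rightarrow> (int \<Rightarrow> real) \<Rightarrow> real \<Rightarrow> int \<Rightarrow> nat \<Rightarrow> real" where
  "yF a x K i 0 = a i i * x i / K"
| "yF a x K i (Suc 0) = yF a x K i 0 + a i (i + 1) / a (i + 1) (i + 1) * yF a x K (i + 1) 0"
| "yF a x K i (Suc (Suc k)) = yF a x K i (Suc k)
     + a i (i + int k + 2) / a (i + 1) (i + int k + 2)
       * (yF a x K (i + 1) (Suc k) - yF a x K (i + 1) k)"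

fun yB :: "(int \<Rightarrow> int \<Rightarrow> real) \<Rightarrow> (int \<Rightarrow> real) \<Rightarrow> real \<Rightarrow> int \<Rightarrow> nat \<Rightarrow> real" where
  "yB a x K i 0 = a i i * x i / K"
| "yB a x K i (Suc 0) = yB a x K i 0 + a i (i - 1) / a (i - 1) (i - 1) * yB a x K (i - 1) 0"
| "yB a x K i (Suc (Suc k)) = yB a x K i (Suc k)
     + a i (i - int k - 2) / a (i - 1) (i - int k - 2)
       * (yB a x K (i - 1) (Suc k) - yB a x K (i - 1) k)"

definition yC :: "(int \<Rightarrow> int \<Rightarrow> real) \<Rightarrow> (int \<Rightarrow> real) \<Rightarrow> real \<Rightarrow> int \<Rightarrow> nat \<Rightarrow> real" where
  "yC a x K i k = yF a x K i k + yB a x K i k - a i i * x i / K"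

end

theory Submission
  imports Defs
begin

text \<open>The recursions telescope. The increment of \<open>yF i\<close> at step \<open>k + 1\<close> is
  \<open>a i (i+k+1) / a (i+1) (i+k+1)\<close> times the increment of \<open>yF (i+1)\<close> at step \<open>k\<close>, which by
  induction is \<open>a (i+1) (i+k+1) * x (i+k+1) / K\<close>; the weights cancel, so \<open>yF i k\<close> is the
  \<open>k\<close>-th partial sum of the forward half of the weighted average. The backward variables are
  the forward ones of the mirrored line, so \<open>yC i k\<close> is a partial sum of the full series and
  converges to it.\<close>

lemma yF_closed_form:
  assumes "\<And>i j. a i j \<noteq> 0"
  shows "yF a x K i k = (a i i * x i + (\<Sum>j<k. a i (i + int (Suc j)) * x (i + int (Suc j)))) / K"
using assms proof (induction a x K i k rule: yF.induct)
  case (1 a x K i)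
  then show ?case by simp
next
  case (2 a x K i)
  then have "a (i + 1) (i + 1) \<noteq> 0" by blast
  then show ?case by (simp add: add_divide_distrib)
next
  case (3 a x K i k)
  have shift: "i + 1 + int (Suc k) = i + int k + 2" "i + int (Suc (Suc k)) = i + int k + 2"
    by simp_all
  have "yF a x K (i + 1) (Suc k) - yF a x K (i + 1) k
        = a (i + 1) (i + int k + 2) * x (i + int k + 2) / K"
    unfolding "3.IH"(2,3)[OF "3.prems"] sum.lessThan_Suc shift(1)
    by (simp add: diff_divide_distrib[symmetric])
  moreover have "a (i + 1) (i + int k + 2) \<noteq> 0" by (rule "3.prems")
  ultimately have "yF a x K i (Suc (Suc k))
      = yF a x K i (Suc k) + a i (i + int k + 2) * x (i + int k + 2) / K"
    by (simp only: yF.simps) simp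
  then show ?case
    unfolding "3.IH"(1)[OF "3.prems"] sum.lessThan_Suc[of _ "Suc k"] shift(2)
    by (simp add: add_divide_distrib)
qed

lemma yB_eq_yF_mirror:
  "yB a x K i k = yF (\<lambda>i j. a (- i) (- j)) (\<lambda>i. x (- i)) K (- i) k"
proof (induction a x K i k rule: yB.induct)
  case (3 a x K i k)
  have "- i + int k + 2 = - (i - int k - 2)" "- i + 1 = - (i - 1)" by simp_all
  then show ?case using "3.IH" by (simp only: yB.simps yF.simps) simp
qed simp_all

lemma yB_closed_form:
  assumes "\<And>i j. a i j \<noteq> 0"
  shows "yB a x K i k = (a i i * x i + (\<Sum>j<k. a i (i - int (Suc j)) * x (i - int (Suc j)))) / K"
  using yF_closed_form[of "\<lambda>i j. a (- i) (- j)" "\<lambda>i. x (- i)" K "- i" k] assms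
  by (simp add: yB_eq_yF_mirror)

lemma yC_closed_form:
  assumes "\<And>i j. a i j \<noteq> 0"
  shows "yC a x K i k = (1 / K) * (a i i * x i
    + (\<Sum>j<k. a i (i - int (Suc j)) * x (i - int (Suc j)) + a i (i + int (Suc j)) * x (i + int (Suc j))))"
  unfolding yC_def yF_closed_form[OF assms] yB_closed_form[OF assms]
  by (simp add: sum.distrib add_divide_distrib[symmetric] algebra_simps)

theorem theorem3:
  fixes a :: "int \<Rightarrow> int \<Rightarrow> real" and x :: "int \<Rightarrow> real" and K :: real
  assumes nz: "\<And>i j. a i j \<noteq> 0"
    and convF: "\<And>i. summable (\<lambda>j::nat. a i (i + int (Suc j)) * x (i + int (Suc j)))"
    and convB: "\<And>i. summable (\<lambda>j::nat. a i (i - int (Suc j)) * x (i - int (Suc j)))"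
    and Knz: "K \<noteq> 0"
    and convK: "\<And>i. summable (\<lambda>j::nat. a i (i - int (Suc j)) + a i (i + int (Suc j)))"
    and Kdef: "\<And>i. K = a i i + (\<Sum>j. a i (i - int (Suc j)) + a i (i + int (Suc j)))"
  shows "\<And>i. (\<lambda>k. yC a x K i k) \<longlonglongrightarrow>
    (1 / K) * (a i i * x i + (\<Sum>j. a i (i - int (Suc j)) * x (i - int (Suc j))
                                   + a i (i + int (Suc j)) * x (i + int (Suc j))))"
proof -
  fix i
  have "summable (\<lambda>j. a i (i - int (Suc j)) * x (i - int (Suc j))
                      + a i (i + int (Suc j)) * x (i + int (Suc j)))"
    using convB convF by (rule summable_add)
  then have "(\<lambda>k. \<Sum>j<k. a i (i - int (Suc j)) * x (i - int (Suc j))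
                        + a i (i + int (Suc j)) * x (i + int (Suc j)))
      \<longlonglongrightarrow> (\<Sum>j. a i (i - int (Suc j)) * x (i - int (Suc j))
                        + a i (i + int (Suc j)) * x (i + int (Suc j)))"
    by (rule summable_LIMSEQ)
  then show "?thesis i"
    unfolding yC_closed_form[OF nz] by (intro tendsto_intros)
qed

end
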